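(* Let $i\in\{1,2\}$ and let $(X,e_X,\mu_X)$ and $(Y,e_Y,\mu_Y)$ be H-equivalent $\mathrm{NP}_i$-digital H-spaces. If $(X,e_X,\mu_X)$ is homotopy-associative, then $(Y,e_Y,\mu_Y)$ is homotopy-associative.
   Context: A digital image is a finite set $X\subset\mathbb{Z}^n$ with a reflexive symmetric adjacency relation (a finite reflexive graph); continuous maps send adjacent points to adjacent points. On products, $\mathrm{NP}_u$ declares two tuples adjacent iff coordinates are adjacent in at most $u$ positions and equal elsewhere. An $\mathrm{NP}_i$-homotopy from $f$ to $g:X\to Y$ is an $\mathrm{NP}_i$-continuous $H:X\times[0,m]_{\mathbb{Z}}\to Y$ with $H(\cdot,0)=f$, $H(\cdot,m)=g$; write $f\simeq_i g$ (products in the domain carry $\mathrm{NP}_i$). $(f,g)(x)=(f(x),g(x))$, $(f\times g)(x,y)=(f(x),g(y))$; $c_e$ is the constant map at $e$. An $\mathrm{NP}_i$-digital H-space is $(X,e,\mu)$ with $\mu:X\times X\to X$ $\mathrm{NP}_i$-continuous, $\mu\circ(\mathrm{id}_X,c_e)\simeq_i\mathrm{id}_X$, $\mu\circ(c_e,\mathrm{id}_X)\simeq_i\mathrm{id}_X$ (homotopies need not be pointed). It is homotopy-associative if $\mu\circ(\mathrm{id}_X\times\mu)\simeq_i\mu\circ(\mu\times\mathrm{id}_X)$ as maps $X\times X\times X\to X$. Two H-spaces $(X,e_X,\mu_X)$, $(Y,e_Y,\mu_Y)$ are H-equivalent if there are continuous pointed maps $f:(X,e_X)\to(Y,e_Y)$,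 $g:(Y,e_Y)\to(X,e_X)$ with $f\circ g\simeq_i\mathrm{id}_Y$, $g\circ f\simeq_i\mathrm{id}_X$, $f\circ\mu_X\simeq_i\mu_Y\circ(f\times f)$, $g\circ\mu_Y\simeq_i\mu_X\circ(g\times g)$. *)

theory Defs
  imports Main
begin

definition dimage :: "'a set \<Rightarrow> ('a \<Rightarrow> 'a \<Rightarrow> bool) \<Rightarrow> bool" where
  "dimage X A \<longleftrightarrow> finite X \<and> (\<forall>x\<in>X. A x x) \<and> (\<forall>x\<in>X. \<forall>y\<in>X. A x y \<longrightarrow> A y x)"

definition dcont :: "'a set \<Rightarrow> ('a \<Rightarrow> 'a \<Rightarrow> bool) \<Rightarrow> 'b set \<Rightarrow> ('b \<Rightarrow> 'b \<Rightarrow> bool) \<Rightarrow> ('a \<Rightarrow> 'b) \<Rightarrow> bool" where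
  "dcont X A Y B f \<longleftrightarrow> f ` X \<subseteq> Y \<and> (\<forall>x\<in>X. \<forall>y\<in>X. A x y \<longrightarrow> B (f x) (f y))"

definition np2 :: "nat \<Rightarrow> ('a \<Rightarrow> 'a \<Rightarrow> bool) \<Rightarrow> ('b \<Rightarrow> 'b \<Rightarrow> bool) \<Rightarrow> 'a \<times> 'b \<Rightarrow> 'a \<times> 'b \<Rightarrow> bool" where
  "np2 u A B p q \<longleftrightarrow> A (fst p) (fst q) \<and> B (snd p) (snd q) \<and>
     of_bool (fst p \<noteq> fst q) + of_bool (snd p \<noteq> snd q) \<le> u"

definition np3 :: "nat \<Rightarrow> ('a \<Rightarrow> 'a \<Rightarrow> bool) \<Rightarrow> 'a \<times> 'a \<times> 'a \<Rightarrow> 'a \<times> 'a \<times> 'a \<Rightarrow> bool" where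
  "np3 u A p q \<longleftrightarrow> (case p of (x1, x2, x3) \<Rightarrow> case q of (y1, y2, y3) \<Rightarrow>
     A x1 y1 \<and> A x2 y2 \<and> A x3 y3 \<and>
     of_bool (x1 \<noteq> y1) + of_bool (x2 \<noteq> y2) + of_bool (x3 \<noteq> y3) \<le> u)"

definition c1 :: "int \<Rightarrow> int \<Rightarrow> bool" where
  "c1 s t \<longleftrightarrow> \<bar>s - t\<bar> \<le> 1"

definition dhomotopic :: "nat \<Rightarrow> 'a set \<Rightarrow> ('a \<Rightarrow> 'a \<Rightarrow> bool) \<Rightarrow> 'b set \<Rightarrow> ('b \<Rightarrow> 'b \<Rightarrow> bool)
    \<Rightarrow> ('a \<Rightarrow> 'b) \<Rightarrow> ('a \<Rightarrow> 'b) \<Rightarrow> bool" where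
  "dhomotopic i X A Y B f g \<longleftrightarrow>
     (\<exists>m::nat. \<exists>H :: 'a \<times> int \<Rightarrow> 'b.
        dcont (X \<times> {0..int m}) (np2 i A c1) Y B H \<and>
        (\<forall>x\<in>X. H (x, 0) = f x \<and> H (x, int m) = g x))"

definition hspace :: "nat \<Rightarrow> 'a set \<Rightarrow> ('a \<Rightarrow> 'a \<Rightarrow> bool) \<Rightarrow> 'a \<Rightarrow> ('a \<times> 'a \<Rightarrow> 'a) \<Rightarrow> bool" where
  "hspace i X A e \<mu> \<longleftrightarrow> dimage X A \<and> e \<in> X \<and>
     dcont (X \<times> X) (np2 i A A) X A \<mu> \<and>
     dhomotopic i X A X A (\<lambda>x. \<mu> (x, e)) id \<and>
     dhomotopic i X A X A (\<lambda>x. \<mu> (e, x)) id"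

definition hassoc :: "nat \<Rightarrow> 'a set \<Rightarrow> ('a \<Rightarrow> 'a \<Rightarrow> bool) \<Rightarrow> ('a \<times> 'a \<Rightarrow> 'a) \<Rightarrow> bool" where
  "hassoc i X A \<mu> \<longleftrightarrow>
     dhomotopic i (X \<times> X \<times> X) (np3 i A) X A
       (\<lambda>(x, y, z). \<mu> (x, \<mu> (y, z))) (\<lambda>(x, y, z). \<mu> (\<mu> (x, y), z))"

definition hequiv :: "nat \<Rightarrow> 'a set \<Rightarrow> ('a \<Rightarrow> 'a \<Rightarrow> bool) \<Rightarrow> 'a \<Rightarrow> ('a \<times> 'a \<Rightarrow> 'a)
    \<Rightarrow> 'b set \<Rightarrow> ('b \<Rightarrow> 'b \<Rightarrow> bool) \<Rightarrow> 'b \<Rightarrow> ('b \<times> 'b \<Rightarrow> 'b) \<Rightarrow> bool" where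
  "hequiv i X A eX \<mu>X Y B eY \<mu>Y \<longleftrightarrow>
     (\<exists>f g. dcont X A Y B f \<and> f eX = eY \<and> dcont Y B X A g \<and> g eY = eX \<and>
        dhomotopic i Y B Y B (f \<circ> g) id \<and>
        dhomotopic i X A X A (g \<circ> f) id \<and>
        dhomotopic i (X \<times> X) (np2 i A A) Y B (f \<circ> \<mu>X) (\<lambda>(x, x'). \<mu>Y (f x, f x')) \<and>
        dhomotopic i (Y \<times> Y) (np2 i B B) X A (g \<circ> \<mu>Y) (\<lambda>(y, y'). \<mu>X (g y, g y')))"

end

theory Submission imports Defs begin

text \<open>If \<open>g : Y \<rightarrow> X\<close> is an H-map, i.e.
  \<open>g \<circ> \<mu>\<^sub>Y \<simeq> \<mu>\<^sub>X \<circ> (g \<times> g)\<close>, then \<open>g\<close> carries both bracketings of \<open>\<mu>\<^sub>Y\<close> to the corresponding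
  bracketings of \<open>\<mu>\<^sub>X\<close> applied to \<open>g \<times> g \<times> g\<close>. Hence, using \<open>f \<circ> g \<simeq> id\<close>,
  \<open>\<mu>\<^sub>Y(x, \<mu>\<^sub>Y(y, z)) \<simeq> f(g(\<mu>\<^sub>Y(x, \<mu>\<^sub>Y(y, z)))) \<simeq> f(\<mu>\<^sub>X(gx, \<mu>\<^sub>X(gy, gz))) \<simeq> f(\<mu>\<^sub>X(\<mu>\<^sub>X(gx, gy), gz))
   \<simeq> f(g(\<mu>\<^sub>Y(\<mu>\<^sub>Y(x, y), z))) \<simeq> \<mu>\<^sub>Y(\<mu>\<^sub>Y(x, y), z)\<close>.\<close>

lemma np2_c1_iff:
  "np2 i A c1 (x, t) (x', t') \<longleftrightarrow>
     A x x' \<and> \<bar>t - t'\<bar> \<le> 1 \<and> of_bool (x \<noteq> x') + of_bool (t \<noteq> t') \<le> i"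
  by (simp add: np2_def c1_def)

lemma dcont_comp: "dcont X A Y B f \<Longrightarrow> dcont Y B Z C g \<Longrightarrow> dcont X A Z C (g \<circ> f)"
  unfolding dcont_def by (auto simp: image_subset_iff)

lemma dcont_id: "dcont X A X A id"
  by (simp add: dcont_def)

lemma of_bool_ne_image_le: "(of_bool (f x \<noteq> f y) :: nat) \<le> of_bool (x \<noteq> y)"
  by auto

lemma dcont_map_prod:
  assumes f: "dcont P C Z E f" and g: "dcont Q D W F g"
  shows "dcont (P \<times> Q) (np2 i C D) (Z \<times> W) (np2 i E F) (map_prod f g)"
proof -
  have "np2 i E F (f p, g q) (f p', g q')"
    if "p \<in> P" "q \<in> Q" "p' \<in> P" "q' \<in> Q" "np2 i C D (p, q) (p', q')" for p q p' q'
    using that f g add_mono[OF of_bool_ne_image_le of_bool_ne_image_le, of f p p' g q q']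
    unfolding dcont_def np2_def by auto
  with f g show ?thesis unfolding dcont_def by auto
qed

lemma dcont_swap: "dcont (P \<times> Q) (np2 i C D) (Q \<times> P) (np2 i D C) prod.swap"
  unfolding dcont_def np2_def by auto

lemma dcont_np3_assoc_right: "dcont (X \<times> X \<times> X) (np3 i A) (X \<times> X \<times> X) (np2 i A (np2 i A A)) id"
  unfolding dcont_def np2_def np3_def by (auto simp: of_bool_def split: if_splits)

lemma dcont_np3_assoc_left:
  "dcont (X \<times> X \<times> X) (np3 i A) ((X \<times> X) \<times> X) (np2 i (np2 i A A) A) (\<lambda>(x, y, z). ((x, y), z))"
  unfolding dcont_def np2_def np3_def by (auto simp: of_bool_def split: if_splits)

lemma dcont_np3_map:
  assumes "dcont X A Y B g"
  shows "dcont (X \<times> X \<times> X) (np3 i A) (Y \<times> Y \<times> Y) (np3 i B) (map_prod g (map_prod g g))"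
  using assms unfolding dcont_def np3_def by (auto simp: of_bool_def split: if_splits)

lemma dhomotopic_cong:
  assumes "dhomotopic i X A Y B f g" "\<And>x. x \<in> X \<Longrightarrow> f x = f' x" "\<And>x. x \<in> X \<Longrightarrow> g x = g' x"
  shows "dhomotopic i X A Y B f' g'"
  using assms unfolding dhomotopic_def by metis

lemma dhomotopic_comp_left:
  assumes "dhomotopic i X A Y B f g" "dcont Y B Z C k"
  shows "dhomotopic i X A Z C (k \<circ> f) (k \<circ> g)"
proof -
  obtain m H where H: "dcont (X \<times> {0..int m}) (np2 i A c1) Y B H"
    "\<forall>x\<in>X. H (x, 0) = f x \<and> H (x, int m) = g x"
    using assms(1) unfolding dhomotopic_def by blast
  have "dcont (X \<times> {0..int m}) (np2 i A c1) Z C (k \<circ> H)"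
    using dcont_comp[OF H(1) assms(2)] .
  with H(2) show ?thesis
    unfolding dhomotopic_def by (intro exI[of _ m] exI[of _ "k \<circ> H"]) auto
qed

lemma dhomotopic_comp_right:
  assumes "dhomotopic i X A Y B f g" "dcont X' A' X A p"
  shows "dhomotopic i X' A' Y B (f \<circ> p) (g \<circ> p)"
proof -
  obtain m H where H: "dcont (X \<times> {0..int m}) (np2 i A c1) Y B H"
    "\<forall>x\<in>X. H (x, 0) = f x \<and> H (x, int m) = g x"
    using assms(1) unfolding dhomotopic_def by blast
  from dcont_comp[OF dcont_map_prod[OF assms(2) dcont_id] H(1)]
  have "dcont (X' \<times> {0..int m}) (np2 i A' c1) Y B (H \<circ> map_prod p id)" .
  with H(2) assms(2) show ?thesis
    unfolding dhomotopic_def dcont_def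
    by (intro exI[of _ m] exI[of _ "H \<circ> map_prod p id"]) auto
qed

lemma dhomotopic_sym:
  assumes "dhomotopic i X A Y B f g"
  shows "dhomotopic i X A Y B g f"
proof -
  obtain m H where H: "dcont (X \<times> {0..int m}) (np2 i A c1) Y B H"
    "\<forall>x\<in>X. H (x, 0) = f x \<and> H (x, int m) = g x"
    using assms(1) unfolding dhomotopic_def by blast
  let ?rev = "map_prod id (\<lambda>t. int m - t)"
  have "dcont {0..int m} c1 {0..int m} c1 (\<lambda>t. int m - t)"
    unfolding dcont_def c1_def by auto
  from dcont_comp[OF dcont_map_prod[OF dcont_id this] H(1)] H(2) show ?thesis
    unfolding dhomotopic_def by (intro exI[of _ m] exI[of _ "H \<circ> ?rev"]) auto
qed

lemma dhomotopic_trans: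
  assumes "dhomotopic i X A Y B f g" "dhomotopic i X A Y B g h"
  shows "dhomotopic i X A Y B f h"
proof -
  obtain m1 H1 where H1: "dcont (X \<times> {0..int m1}) (np2 i A c1) Y B H1"
    "\<forall>x\<in>X. H1 (x, 0) = f x \<and> H1 (x, int m1) = g x"
    using assms(1) unfolding dhomotopic_def by blast
  obtain m2 H2 where H2: "dcont (X \<times> {0..int m2}) (np2 i A c1) Y B H2"
    "\<forall>x\<in>X. H2 (x, 0) = g x \<and> H2 (x, int m2) = h x"
    using assms(2) unfolding dhomotopic_def by blast
  define H where "H = (\<lambda>(x, t). if t \<le> int m1 then H1 (x, t) else H2 (x, t - int m1))"
  have H_late: "H (x, t) = H2 (x, t - int m1)" if "x \<in> X" "int m1 \<le> t" for x t
    using that H1(2) H2(2) by (auto simp: H_def)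
  have "dcont (X \<times> {0..int (m1 + m2)}) (np2 i A c1) Y B H"
    unfolding dcont_def
  proof safe
    fix x t assume "x \<in> X" "t \<in> {0..int (m1 + m2)}"
    then show "H (x, t) \<in> Y" using H1(1) H2(1) unfolding dcont_def H_def by auto
  next
    fix x t x' t' assume x: "x \<in> X" "x' \<in> X" and t: "t \<in> {0..int (m1 + m2)}" "t' \<in> {0..int (m1 + m2)}"
      and adj: "np2 i A c1 (x, t) (x', t')"
    \<comment> \<open>adjacent times lie both in the first or both in the second stage, which share time \<open>m1\<close>\<close>
    have "t \<le> int m1 \<and> t' \<le> int m1 \<or> int m1 \<le> t \<and> int m1 \<le> t'"
      using adj unfolding np2_c1_iff by linarith
    then show "B (H (x, t)) (H (x', t'))"
    proof
      assume "t \<le> int m1 \<and> t' \<le> int m1"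
      then show ?thesis using H1(1) x t adj unfolding dcont_def H_def by auto
    next
      assume late: "int m1 \<le> t \<and> int m1 \<le> t'"
      have "np2 i A c1 (x, t - int m1) (x', t' - int m1)"
        using adj unfolding np2_c1_iff by auto
      then show ?thesis using H2(1) x t late unfolding dcont_def by (auto simp: H_late)
    qed
  qed
  then show ?thesis unfolding dhomotopic_def using H1(2) H2(2)
    by (intro exI[of _ "m1 + m2"] exI[of _ H]) (auto simp: H_def)
qed

lemma dhomotopic_map_prod_right:
  assumes K: "dhomotopic i P C Z E K0 K1" and u: "dcont Q D W F u"
  shows "dhomotopic i (Q \<times> P) (np2 i D C) (W \<times> Z) (np2 i F E) (map_prod u K0) (map_prod u K1)"
proof -
  obtain m H where H: "dcont (P \<times> {0..int m}) (np2 i C c1) Z E H"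
    "\<forall>p\<in>P. H (p, 0) = K0 p \<and> H (p, int m) = K1 p"
    using K unfolding dhomotopic_def by blast
  define H' where "H' = (\<lambda>((q, p), t). (u q, H (p, t)))"
  have adj: "np2 i F E (H' ((q, p), t)) (H' ((q', p'), t'))"
    if qp: "q \<in> Q" "p \<in> P" "q' \<in> Q" "p' \<in> P" and t: "t \<in> {0..int m}" "t' \<in> {0..int m}"
      and adj: "np2 i (np2 i D C) c1 ((q, p), t) ((q', p'), t')" for q p t q' p' t'
  proof -
    have "np2 i C c1 (p, t) (p', t')"
      using adj unfolding np2_def c1_def by (auto simp: of_bool_def split: if_splits)
    then have "E (H (p, t)) (H (p', t'))" using H(1) qp t unfolding dcont_def by auto
    moreover have "F (u q) (u q')" using u qp adj unfolding dcont_def np2_def by auto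
    \<comment> \<open>for \<open>i \<le> 1\<close>, a step in \<open>q\<close> forces \<open>p\<close> and \<open>t\<close> to stay fixed, so no bound on \<open>i\<close> is needed\<close>
    moreover have "of_bool (u q \<noteq> u q') + of_bool (H (p, t) \<noteq> H (p', t')) \<le> i"
      using adj unfolding np2_def by (auto simp: of_bool_def split: if_splits)
    ultimately show ?thesis by (simp add: H'_def np2_def)
  qed
  have "dcont ((Q \<times> P) \<times> {0..int m}) (np2 i (np2 i D C) c1) (W \<times> Z) (np2 i F E) H'"
    using u H(1) adj unfolding dcont_def by (auto simp: H'_def)
  then show ?thesis unfolding dhomotopic_def using H(2)
    by (intro exI[of _ m] exI[of _ H']) (auto simp: H'_def)
qed

lemma dhomotopic_map_prod_left:
  assumes "dhomotopic i P C Z E K0 K1" "dcont Q D W F u"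
  shows "dhomotopic i (P \<times> Q) (np2 i C D) (Z \<times> W) (np2 i E F) (map_prod K0 u) (map_prod K1 u)"
proof -
  have "dhomotopic i (P \<times> Q) (np2 i C D) (Z \<times> W) (np2 i E F)
      (prod.swap \<circ> (map_prod u K0 \<circ> prod.swap)) (prod.swap \<circ> (map_prod u K1 \<circ> prod.swap))"
    using dhomotopic_comp_left[OF dhomotopic_comp_right[OF dhomotopic_map_prod_right[OF assms] dcont_swap]
        dcont_swap] .
  then show ?thesis by (rule dhomotopic_cong) auto
qed

lemma dcont_np3_map_prod_right:
  assumes "dcont (X \<times> X) (np2 i A A) X A \<mu>"
  shows "dcont (X \<times> X \<times> X) (np3 i A) (X \<times> X) (np2 i A A) (\<lambda>(x, y, z). (x, \<mu> (y, z)))"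
proof -
  have "(\<lambda>(x, y, z). (x, \<mu> (y, z))) = map_prod id \<mu> \<circ> id"
    by (auto simp: fun_eq_iff)
  then show ?thesis
    using dcont_comp[OF dcont_np3_assoc_right dcont_map_prod[OF dcont_id assms]] by metis
qed

lemma dcont_np3_map_prod_left:
  assumes "dcont (X \<times> X) (np2 i A A) X A \<mu>"
  shows "dcont (X \<times> X \<times> X) (np3 i A) (X \<times> X) (np2 i A A) (\<lambda>(x, y, z). (\<mu> (x, y), z))"
proof -
  have "(\<lambda>(x, y, z). (\<mu> (x, y), z)) = map_prod \<mu> id \<circ> (\<lambda>(x, y, z). ((x, y), z))"
    by (auto simp: fun_eq_iff)
  then show ?thesis
    using dcont_comp[OF dcont_np3_assoc_left dcont_map_prod[OF assms dcont_id]] by metis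
qed

declare dhomotopic_trans [trans]

context
  fixes i :: nat and X :: "'a set" and A :: "'a \<Rightarrow> 'a \<Rightarrow> bool"
    and Y :: "'b set" and B :: "'b \<Rightarrow> 'b \<Rightarrow> bool"
    and g :: "'b \<Rightarrow> 'a" and \<mu>X :: "'a \<times> 'a \<Rightarrow> 'a" and \<mu>Y :: "'b \<times> 'b \<Rightarrow> 'b"
  assumes g: "dcont Y B X A g"
    and \<mu>X: "dcont (X \<times> X) (np2 i A A) X A \<mu>X"
    and \<mu>Y: "dcont (Y \<times> Y) (np2 i B B) Y B \<mu>Y"
    and g_hmap: "dhomotopic i (Y \<times> Y) (np2 i B B) X A (g \<circ> \<mu>Y) (\<lambda>(y, y'). \<mu>X (g y, g y'))"
begin

lemma dhomotopic_hmap_assoc_right: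
  "dhomotopic i (Y \<times> Y \<times> Y) (np3 i B) X A
     (\<lambda>(x, y, z). g (\<mu>Y (x, \<mu>Y (y, z)))) (\<lambda>(x, y, z). \<mu>X (g x, \<mu>X (g y, g z)))"
proof -
  have "dhomotopic i (Y \<times> Y \<times> Y) (np3 i B) X A
      (\<lambda>(x, y, z). g (\<mu>Y (x, \<mu>Y (y, z)))) (\<lambda>(x, y, z). \<mu>X (g x, g (\<mu>Y (y, z))))"
    by (rule dhomotopic_cong[OF dhomotopic_comp_right[OF g_hmap dcont_np3_map_prod_right[OF \<mu>Y]]])
      auto
  also have "dhomotopic i (Y \<times> Y \<times> Y) (np3 i B) X A
      \<dots> (\<lambda>(x, y, z). \<mu>X (g x, \<mu>X (g y, g z)))"
    by (rule dhomotopic_cong[OF dhomotopic_comp_right[OF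
          dhomotopic_comp_left[OF dhomotopic_map_prod_right[OF g_hmap g] \<mu>X] dcont_np3_assoc_right]])
      auto
  finally show ?thesis .
qed

lemma dhomotopic_hmap_assoc_left:
  "dhomotopic i (Y \<times> Y \<times> Y) (np3 i B) X A
     (\<lambda>(x, y, z). g (\<mu>Y (\<mu>Y (x, y), z))) (\<lambda>(x, y, z). \<mu>X (\<mu>X (g x, g y), g z))"
proof -
  have "dhomotopic i (Y \<times> Y \<times> Y) (np3 i B) X A
      (\<lambda>(x, y, z). g (\<mu>Y (\<mu>Y (x, y), z))) (\<lambda>(x, y, z). \<mu>X (g (\<mu>Y (x, y)), g z))"
    by (rule dhomotopic_cong[OF dhomotopic_comp_right[OF g_hmap dcont_np3_map_prod_left[OF \<mu>Y]]])
      auto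
  also have "dhomotopic i (Y \<times> Y \<times> Y) (np3 i B) X A
      \<dots> (\<lambda>(x, y, z). \<mu>X (\<mu>X (g x, g y), g z))"
    by (rule dhomotopic_cong[OF dhomotopic_comp_right[OF
          dhomotopic_comp_left[OF dhomotopic_map_prod_left[OF g_hmap g] \<mu>X] dcont_np3_assoc_left]])
      auto
  finally show ?thesis .
qed

end

theorem mainTheorem4:
  fixes i :: nat
    and X :: "'a set" and A :: "'a \<Rightarrow> 'a \<Rightarrow> bool" and eX :: 'a and \<mu>X :: "'a \<times> 'a \<Rightarrow> 'a"
    and Y :: "'b set" and B :: "'b \<Rightarrow> 'b \<Rightarrow> bool" and eY :: 'b and \<mu>Y :: "'b \<times> 'b \<Rightarrow> 'b"
  assumes "i \<in> {1, 2}"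
    and "hspace i X A eX \<mu>X"
    and "hspace i Y B eY \<mu>Y"
    and "hequiv i X A eX \<mu>X Y B eY \<mu>Y"
    and "hassoc i X A \<mu>X"
  shows "hassoc i Y B \<mu>Y"
proof -
  have \<mu>X: "dcont (X \<times> X) (np2 i A A) X A \<mu>X" and \<mu>Y: "dcont (Y \<times> Y) (np2 i B B) Y B \<mu>Y"
    using assms(2,3) unfolding hspace_def by auto
  obtain f g where f: "dcont X A Y B f" and g: "dcont Y B X A g"
    and fg: "dhomotopic i Y B Y B (f \<circ> g) id"
    and g_hmap: "dhomotopic i (Y \<times> Y) (np2 i B B) X A (g \<circ> \<mu>Y) (\<lambda>(y, y'). \<mu>X (g y, g y'))"
    using assms(4) unfolding hequiv_def by blast
  let ?Y3 = "Y \<times> Y \<times> Y"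
  have "dhomotopic i ?Y3 (np3 i B) Y B (\<lambda>(x, y, z). \<mu>Y (x, \<mu>Y (y, z)))
      (f \<circ> (\<lambda>(x, y, z). g (\<mu>Y (x, \<mu>Y (y, z)))))"
    by (rule dhomotopic_sym, rule dhomotopic_cong[OF dhomotopic_comp_right[OF fg
          dcont_comp[OF dcont_np3_map_prod_right[OF \<mu>Y] \<mu>Y]]]) auto
  also have "dhomotopic i ?Y3 (np3 i B) Y B \<dots> (f \<circ> (\<lambda>(x, y, z). \<mu>X (g x, \<mu>X (g y, g z))))"
    using dhomotopic_comp_left[OF dhomotopic_hmap_assoc_right[OF g \<mu>X \<mu>Y g_hmap] f] .
  also have "dhomotopic i ?Y3 (np3 i B) Y B \<dots> (f \<circ> (\<lambda>(x, y, z). \<mu>X (\<mu>X (g x, g y), g z)))"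
    using assms(5) unfolding hassoc_def
    by (rule dhomotopic_cong[OF dhomotopic_comp_left[OF dhomotopic_comp_right[OF _ dcont_np3_map[OF g]] f]])
      auto
  also have "dhomotopic i ?Y3 (np3 i B) Y B \<dots> (f \<circ> (\<lambda>(x, y, z). g (\<mu>Y (\<mu>Y (x, y), z))))"
    using dhomotopic_comp_left[OF dhomotopic_sym[OF dhomotopic_hmap_assoc_left[OF g \<mu>X \<mu>Y g_hmap]] f] .
  also have "dhomotopic i ?Y3 (np3 i B) Y B \<dots> (\<lambda>(x, y, z). \<mu>Y (\<mu>Y (x, y), z))"
    by (rule dhomotopic_cong[OF dhomotopic_comp_right[OF fg
          dcont_comp[OF dcont_np3_map_prod_left[OF \<mu>Y] \<mu>Y]]]) auto
  finally show ?thesis unfolding hassoc_def .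
qed

end
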